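(* Assume conditions (1)–(4) of the context and $n\cdot\mathrm{SNR}^q=\tilde\Omega(1)$. Then on the event $\mathcal E_{\mathrm{prelim}}$ there exists $T_1=\tilde O(\eta^{-1}m\sigma_0^{2-q}\|\boldsymbol\mu\|_2^{-q})$ such that - $\max_r\gamma_{j,r}^{(T_1)}=\Omega(1)$ for $j\in\{\pm1\}$; - $|\rho_{j,r,i}^{(t)}|=O(\sigma_0\sigma_p\sqrt d)$ for all $j\in\{\pm1\}$, $r\in[m]$, $i\in[n]$ and $0\le t\le T_1$.
   Context: Data: nonzero $\boldsymbol\mu\in\mathbb R^d$, $\sigma_p>0$; sample $(\mathbf x,y)$, $\mathbf x=[\mathbf x_1^\top,\mathbf x_2^\top]^\top$: $y$ Rademacher, $\boldsymbol\xi\sim N(\mathbf 0,\sigma_p^2(\mathbf I-\boldsymbol\mu\boldsymbol\mu^\top\|\boldsymbol\mu\|_2^{-2}))$, one patch $y\boldsymbol\mu$, the other $\boldsymbol\xi$. $\mathrm{SNR}=\|\boldsymbol\mu\|_2/(\sigma_p\sqrt d)$. Training set $\{(\mathbf x_i,y_i)\}_{i=1}^n$ i.i.d., noise patches $\boldsymbol\xi_i$. Network: $\sigma(z)=(\max\{0,z\})^q$, $q>2$; $F_j(\mathbf W_j,\mathbf x)=\frac1m\sum_{r=1}^m[\sigma(\langle\mathbf w_{j,r},\mathbf x_1\rangle)+\sigma(\langle\mathbf w_{j,r},\mathbf x_2\rangle)]$, $f=F_{+1}-F_{-1}$; $\ell(z)=\log(1+e^{-z})$, $L_S(\mathbf W)=\frac1n\sum_i\ell(y_if(\mathbf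 W,\mathbf x_i))$. Gradient descent with step $\eta$ from i.i.d. $N(0,\sigma_0^2)$ initialization. Signal-noise decomposition: unique $\gamma_{j,r}^{(t)}\ge0$, $\rho_{j,r,i}^{(t)}$ with $\mathbf w_{j,r}^{(t)}=\mathbf w_{j,r}^{(0)}+j\gamma_{j,r}^{(t)}\|\boldsymbol\mu\|_2^{-2}\boldsymbol\mu+\sum_i\rho_{j,r,i}^{(t)}\|\boldsymbol\xi_i\|_2^{-2}\boldsymbol\xi_i$. Conditions: (1) $d=\tilde\Omega(m^{2\vee[4/(q-2)]}n^{4\vee[(2q-2)/(q-2)]})$; (2) $n,m=\Omega(\mathrm{polylog}(d))$; (3) $\eta\le\tilde O(\min\{\|\boldsymbol\mu\|_2^{-2},\sigma_p^{-2}d^{-1}\})$; (4) $\tilde O(nd^{-1/2})\min\{(\sigma_p\sqrt d)^{-1},\|\boldsymbol\mu\|_2^{-1}\}\le\sigma_0\le\tilde O(m^{-2/(q-2)}n^{-[1/(q-2)]\vee1})\min\{(\sigma_p\sqrt d)^{-1},\|\boldsymbol\mu\|_2^{-1}\}$. Standing assumption: $\mathcal E_{\mathrm{prelim}}$ (for a confidence parameter $\delta\in(0,1)$) is the high-probability event on which: both label classes have at least $n/4$ samples; $\sigma_p^2d/2\le\|\boldsymbol\xi_i\|_2^2\le3\sigma_p^2d/2$, $|\langle\boldsymbol\xi_i,\boldsymbol\xi_{i'}\rangle|\le2\sigma_p^2\sqrt{d\log(4n^2/\delta)}$ ($i\ne i'$); $|\langle\mathbf w_{j,r}^{(0)},\boldsymbol\mu\rangle|\le\sqrt{2\log(8m/\delta)}\sigma_0\|\boldsymbol\mu\|_2$,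 $|\langle\mathbf w_{j,r}^{(0)},\boldsymbol\xi_i\rangle|\le2\sqrt{\log(8mn/\delta)}\sigma_0\sigma_p\sqrt d$, $\max_rj\langle\mathbf w_{j,r}^{(0)},\boldsymbol\mu\rangle\ge\sigma_0\|\boldsymbol\mu\|_2/2$, $\max_rj\langle\mathbf w_{j,r}^{(0)},\boldsymbol\xi_i\rangle\ge\sigma_0\sigma_p\sqrt d/4$. *)

theory Defs
  imports Complex_Main
begin

text \<open>Vectors in R^d are represented as functions nat => real; only the
  coordinates k < d matter.  Explicit dimension is needed because d is
  quantified after the hidden constants of the asymptotic notation.\<close>

definition vinner :: "nat \<Rightarrow> (nat \<Rightarrow> real) \<Rightarrow> (nat \<Rightarrow> real) \<Rightarrow> real" where
  "vinner d u v = (\<Sum>k<d. u k * v k)"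

definition vnorm :: "nat \<Rightarrow> (nat \<Rightarrow> real) \<Rightarrow> real" where
  "vnorm d u = sqrt (vinner d u u)"

definition act :: "real \<Rightarrow> real \<Rightarrow> real" where
  "act q z = (max 0 z) powr q"

definition act_deriv :: "real \<Rightarrow> real \<Rightarrow> real" where
  "act_deriv q z = q * (max 0 z) powr (q - 1)"

definition logloss :: "real \<Rightarrow> real" where
  "logloss z = ln (1 + exp (- z))"

definition logloss_deriv :: "real \<Rightarrow> real" where
  "logloss_deriv z = - 1 / (1 + exp z)"

text \<open>Weights W j r (j in {1,-1}, r < m) are vectors.  F_j evaluated on the
  i-th training sample, whose two patches are y_i mu and xi_i (the order of
  the patches does not affect F_j).\<close>
definition netF ::
  "real \<Rightarrow> nat \<Rightarrow> nat \<Rightarrow> (int \<Rightarrow> nat \<Rightarrow> nat \<Rightarrow> real) \<Rightarrow> int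
    \<Rightarrow> (nat \<Rightarrow> real) \<Rightarrow> int \<Rightarrow> (nat \<Rightarrow> real) \<Rightarrow> real" where
  "netF q d m W j mu yi xii =
     (1 / real m) * (\<Sum>r<m. act q (vinner d (W j r) (\<lambda>k. of_int yi * mu k))
                         + act q (vinner d (W j r) xii))"

definition netf ::
  "real \<Rightarrow> nat \<Rightarrow> nat \<Rightarrow> (int \<Rightarrow> nat \<Rightarrow> nat \<Rightarrow> real)
    \<Rightarrow> (nat \<Rightarrow> real) \<Rightarrow> int \<Rightarrow> (nat \<Rightarrow> real) \<Rightarrow> real" where
  "netf q d m W mu yi xii = netF q d m W 1 mu yi xii - netF q d m W (-1) mu yi xii"

definition risk ::
  "real \<Rightarrow> nat \<Rightarrow> nat \<Rightarrow> nat \<Rightarrow> (nat \<Rightarrow> real) \<Rightarrow> (nat \<Rightarrow> int)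
    \<Rightarrow> (nat \<Rightarrow> nat \<Rightarrow> real) \<Rightarrow> (int \<Rightarrow> nat \<Rightarrow> nat \<Rightarrow> real) \<Rightarrow> real" where
  "risk q d m n mu y xi W =
     (1 / real n) * (\<Sum>i<n. logloss (of_int (y i) * netf q d m W mu (y i) (xi i)))"

text \<open>Gradient of L_S with respect to w_{j,r}, k-th coordinate (computed by
  the chain rule; sigma is continuously differentiable since q > 2).\<close>
definition risk_grad ::
  "real \<Rightarrow> nat \<Rightarrow> nat \<Rightarrow> nat \<Rightarrow> (nat \<Rightarrow> real) \<Rightarrow> (nat \<Rightarrow> int)
    \<Rightarrow> (nat \<Rightarrow> nat \<Rightarrow> real) \<Rightarrow> (int \<Rightarrow> nat \<Rightarrow> nat \<Rightarrow> real)
    \<Rightarrow> int \<Rightarrow> nat \<Rightarrow> nat \<Rightarrow> real" where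
  "risk_grad q d m n mu y xi W j r k =
     (1 / real n) * (\<Sum>i<n. logloss_deriv (of_int (y i) * netf q d m W mu (y i) (xi i))
        * of_int (y i) * of_int j / real m
        * (act_deriv q (vinner d (W j r) (\<lambda>k'. of_int (y i) * mu k')) * (of_int (y i) * mu k)
           + act_deriv q (vinner d (W j r) (xi i)) * xi i k))"

fun gd ::
  "real \<Rightarrow> nat \<Rightarrow> nat \<Rightarrow> nat \<Rightarrow> (nat \<Rightarrow> real) \<Rightarrow> (nat \<Rightarrow> int)
    \<Rightarrow> (nat \<Rightarrow> nat \<Rightarrow> real) \<Rightarrow> real \<Rightarrow> (int \<Rightarrow> nat \<Rightarrow> nat \<Rightarrow> real)
    \<Rightarrow> nat \<Rightarrow> int \<Rightarrow> nat \<Rightarrow> nat \<Rightarrow> real" where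
  "gd q d m n mu y xi eta W0 0 = W0"
| "gd q d m n mu y xi eta W0 (Suc t) =
     (\<lambda>j r k. gd q d m n mu y xi eta W0 t j r k
              - eta * risk_grad q d m n mu y xi (gd q d m n mu y xi eta W0 t) j r k)"

text \<open>The event E_prelim (deterministic conditions on the sample and the
  initialization W0).\<close>
definition E_prelim ::
  "nat \<Rightarrow> nat \<Rightarrow> nat \<Rightarrow> real \<Rightarrow> real \<Rightarrow> real \<Rightarrow> (nat \<Rightarrow> real) \<Rightarrow> (nat \<Rightarrow> int)
    \<Rightarrow> (nat \<Rightarrow> nat \<Rightarrow> real) \<Rightarrow> (int \<Rightarrow> nat \<Rightarrow> nat \<Rightarrow> real) \<Rightarrow> bool" where
  "E_prelim d m n \<delta> \<sigma>p \<sigma>0 mu y xi W0 \<longleftrightarrow>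
     real (card {i. i < n \<and> y i = 1}) \<ge> real n / 4 \<and>
     real (card {i. i < n \<and> y i = -1}) \<ge> real n / 4 \<and>
     (\<forall>i<n. \<sigma>p\<^sup>2 * real d / 2 \<le> (vnorm d (xi i))\<^sup>2 \<and> (vnorm d (xi i))\<^sup>2 \<le> 3 * \<sigma>p\<^sup>2 * real d / 2) \<and>
     (\<forall>i<n. \<forall>i'<n. i \<noteq> i' \<longrightarrow>
        \<bar>vinner d (xi i) (xi i')\<bar> \<le> 2 * \<sigma>p\<^sup>2 * sqrt (real d * ln (4 * (real n)\<^sup>2 / \<delta>))) \<and>
     (\<forall>j\<in>{1,-1}. \<forall>r<m.
        \<bar>vinner d (W0 j r) mu\<bar> \<le> sqrt (2 * ln (8 * real m / \<delta>)) * \<sigma>0 * vnorm d mu) \<and>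
     (\<forall>j\<in>{1,-1}. \<forall>r<m. \<forall>i<n.
        \<bar>vinner d (W0 j r) (xi i)\<bar> \<le> 2 * sqrt (ln (8 * real m * real n / \<delta>)) * \<sigma>0 * \<sigma>p * sqrt (real d)) \<and>
     (\<forall>j\<in>{1,-1}. \<exists>r<m. of_int j * vinner d (W0 j r) mu \<ge> \<sigma>0 * vnorm d mu / 2) \<and>
     (\<forall>j\<in>{1,-1}. \<forall>i<n. \<exists>r<m. of_int j * vinner d (W0 j r) (xi i) \<ge> \<sigma>0 * \<sigma>p * sqrt (real d) / 4)"

end

theory Submission
  imports Defs
begin

(*
  While every neuron stays where the activations are at most 1/2, each F_{y_i}(W, x_i) is at
  most 1 and every loss derivative -l'(y_i f(W, x_i)) is at least 1/4.  Since at least n/4 samples carry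
  label j, the signal inner product j <w_{j,r}, mu> of the best neuron then grows geometrically,
  by a factor 1 + Theta(eta q |mu|^2 (sigma0 |mu|)^(q-2) / m) per step, so it reaches the
  constant 1/C after T1 = O~(m / (eta sigma0^(q-2) |mu|^q)) steps.  In the same time a noise
  inner product <w_{j,r}, xi_i> moves by at most eta/(n m) sigma'(.) sum_i' |<xi_i', xi_i>| per
  step; summed over T1 steps this is s L^q / (n SNR^q) with s = sigma0 sigma_p sqrt d, which
  is at most s because n SNR^q >= C L^kappa.  Finally the noise coefficients rho solve a
  linear system with the normalised Gram matrix of the noise patches, which is diagonally
  dominant by their near-orthogonality, so |rho| <= 2 s.
*)

section \<open>Inner products, activation and loss\<close>

lemma vinner_commute: "vinner d u v = vinner d v u"
  unfolding vinner_def by (simp add: mult.commute)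

lemma vinner_scale_right: "vinner d u (\<lambda>k. c * v k) = c * vinner d u v"
  unfolding vinner_def by (simp add: sum_distrib_left algebra_simps)

lemma vnorm_square: "(vnorm d u)\<^sup>2 = vinner d u u"
  unfolding vnorm_def vinner_def by (simp add: sum_nonneg)

lemma vinner_decomposition:
  assumes "\<forall>k<d. w k = w0 k + c * v k / A + (\<Sum>i<n. \<rho> i * xi i k / B i)"
  shows "vinner d w u = vinner d w0 u + c * vinner d v u / A + (\<Sum>i<n. \<rho> i * vinner d (xi i) u / B i)"
proof -
  have "vinner d w u = (\<Sum>k<d. (w0 k + c * v k / A + (\<Sum>i<n. \<rho> i * xi i k / B i)) * u k)"
    unfolding vinner_def using assms by (intro sum.cong) auto
  then show ?thesis
    unfolding vinner_def
    by (simp add: algebra_simps sum.distrib sum_distrib_left sum_distrib_right sum_divide_distrib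
        sum.swap[where A="{..<d}"])
qed

lemma act_nonneg: "0 \<le> act q z"
  unfolding act_def by simp

lemma act_le_half: "1 \<le> q \<Longrightarrow> z \<le> 1/2 \<Longrightarrow> act q z \<le> 1/2"
proof -
  assume q: "1 \<le> q" and z: "z \<le> 1/2"
  have "act q z \<le> (1/2) powr q" unfolding act_def by (intro powr_mono2) (use q z in auto)
  also have "\<dots> \<le> (1/2) powr 1" by (rule powr_mono') (use q in auto)
  finally show ?thesis by simp
qed

lemma act_deriv_nonneg: "0 \<le> q \<Longrightarrow> 0 \<le> act_deriv q z"
  unfolding act_deriv_def by simp

lemma act_deriv_mono: "1 \<le> q \<Longrightarrow> z \<le> z' \<Longrightarrow> act_deriv q z \<le> act_deriv q z'"
  unfolding act_deriv_def by (intro mult_left_mono powr_mono2) auto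

lemma logloss_deriv_bounds: "-1 \<le> logloss_deriv z" "logloss_deriv z < 0"
  unfolding logloss_deriv_def by (simp_all add: add_pos_pos)

lemma logloss_deriv_le_quarter: "z \<le> 1 \<Longrightarrow> logloss_deriv z \<le> -1/4"
proof -
  assume "z \<le> 1"
  then have "exp z \<le> exp 1" by simp
  also have "exp (1::real) \<le> 3" using exp_le by simp
  finally have "1 + exp z \<le> 4" by simp
  then show ?thesis unfolding logloss_deriv_def by (simp add: divide_simps add_pos_pos)
qed

lemma vinner_gd_Suc:
  "vinner d (gd q d m n mu y xi eta W0 (Suc t) j r) u = vinner d (gd q d m n mu y xi eta W0 t j r) u
     - eta / real n * (\<Sum>i<n. logloss_deriv (of_int (y i) * netf q d m (gd q d m n mu y xi eta W0 t) mu (y i) (xi i))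
        * of_int (y i) * of_int j / real m
        * (act_deriv q (vinner d (gd q d m n mu y xi eta W0 t j r) (\<lambda>k. of_int (y i) * mu k)) * of_int (y i) * vinner d mu u
           + act_deriv q (vinner d (gd q d m n mu y xi eta W0 t j r) (xi i)) * vinner d (xi i) u))"
  unfolding vinner_def risk_grad_def gd.simps
  by (simp add: sum_subtractf sum_distrib_left sum_distrib_right sum.distrib algebra_simps
      sum.swap[where A="{..<d}"] sum_divide_distrib)

lemma diagonally_dominant_solution_bound:
  fixes \<rho> w :: "nat \<Rightarrow> real" and c :: "nat \<Rightarrow> nat \<Rightarrow> real"
  assumes system: "\<And>i. i < n \<Longrightarrow> (\<Sum>i'<n. \<rho> i' * c i' i) = w i"
    and diag: "\<And>i. i < n \<Longrightarrow> c i i = 1"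
    and off_diag: "\<And>i. i < n \<Longrightarrow> (\<Sum>i'\<in>{..<n}-{i}. \<bar>c i' i\<bar>) \<le> \<theta>"
    and "\<theta> < 1"
    and w_bound: "\<And>i. i < n \<Longrightarrow> \<bar>w i\<bar> \<le> s"
    and "i < n"
  shows "\<bar>\<rho> i\<bar> \<le> s / (1 - \<theta>)"
proof -
  define R where "R = Max ((\<lambda>i. \<bar>\<rho> i\<bar>) ` {..<n})"
  have R_ge: "\<bar>\<rho> i\<bar> \<le> R" if "i < n" for i
    unfolding R_def using that by (intro Max_ge) auto
  obtain i0 where i0: "i0 < n" and R_eq: "R = \<bar>\<rho> i0\<bar>"
    using Max_in[of "(\<lambda>i. \<bar>\<rho> i\<bar>) ` {..<n}"] \<open>i < n\<close> unfolding R_def by fastforce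
  have "\<rho> i0 = w i0 - (\<Sum>i'\<in>{..<n}-{i0}. \<rho> i' * c i' i0)"
    using system[OF i0] diag[OF i0] sum.remove[of "{..<n}" i0 "\<lambda>i'. \<rho> i' * c i' i0"] i0 by simp
  then have "R \<le> \<bar>w i0\<bar> + (\<Sum>i'\<in>{..<n}-{i0}. \<bar>\<rho> i'\<bar> * \<bar>c i' i0\<bar>)"
    unfolding R_eq using sum_abs[of "\<lambda>i'. \<rho> i' * c i' i0" "{..<n}-{i0}"] by (simp add: abs_mult)
  also have "\<dots> \<le> s + (\<Sum>i'\<in>{..<n}-{i0}. R * \<bar>c i' i0\<bar>)"
    using w_bound[OF i0] R_ge by (intro add_mono sum_mono mult_right_mono) auto
  also have "\<dots> \<le> s + R * \<theta>"
    using off_diag[OF i0] R_eq by (simp add: sum_distrib_left[symmetric] mult_left_mono)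
  finally have "R * (1 - \<theta>) \<le> s" by (simp add: algebra_simps)
  moreover have "\<bar>\<rho> i\<bar> * (1 - \<theta>) \<le> R * (1 - \<theta>)"
    using R_ge[OF \<open>i < n\<close>] \<open>\<theta> < 1\<close> by (intro mult_right_mono) auto
  ultimately have "\<bar>\<rho> i\<bar> * (1 - \<theta>) \<le> s" by linarith
  then show ?thesis
    using \<open>\<theta> < 1\<close> by (simp add: pos_le_divide_eq)
qed

lemma power_ceiling_log_ge:
  fixes B x :: real
  assumes B: "0 < B" "B \<le> 1/2" and x: "1 \<le> x"
  shows "x \<le> (1 + B) ^ nat \<lceil>2 * ln x / B\<rceil>"
proof -
  have "B - B\<^sup>2 \<le> ln (1 + B)"
    using B by (intro ln_one_plus_pos_lower_bound) auto
  moreover have "B\<^sup>2 \<le> B / 2"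
    using B by (simp add: power2_eq_square mult_left_mono[of B "1/2" B, simplified])
  ultimately have ln_ge: "B / 2 \<le> ln (1 + B)" by linarith
  have "ln x = 2 * ln x / B * (B / 2)"
    using B by simp
  also have "\<dots> \<le> real (nat \<lceil>2 * ln x / B\<rceil>) * ln (1 + B)"
  proof (intro mult_mono)
    have "0 \<le> 2 * ln x / B" using B x by simp
    then show "2 * ln x / B \<le> real (nat \<lceil>2 * ln x / B\<rceil>)" by (simp add: real_nat_ceiling_ge)
  qed (use B ln_ge in auto)
  also have "\<dots> = ln ((1 + B) ^ nat \<lceil>2 * ln x / B\<rceil>)"
    by (simp add: ln_realpow[symmetric])
  finally show ?thesis
    using B x by simp
qed

lemma powr_scaling_identity:
  fixes \<sigma> z \<nu> q :: real
  assumes "0 < \<sigma>" "0 < z" "0 < \<nu>"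
  shows "(\<sigma> * z) powr (q - 1) * z\<^sup>2 / (\<nu>\<^sup>2 * (\<sigma> * \<nu>) powr (q - 2)) = \<sigma> * z / (\<nu> / z) powr q"
proof -
  have shift: "x powr (q - 1) = x powr (q - 2) * x" "x powr q = x powr (q - 2) * x\<^sup>2" if "0 < x" for x :: real
    using that powr_add[of x "q - 2" 1] powr_add[of x "q - 2" 2] by simp_all
  show ?thesis
    using assms by (simp add: powr_mult powr_divide shift field_simps power2_eq_square)
qed

section \<open>Gradient descent in signal and noise directions\<close>

locale gd_setting =
  fixes q :: real and d m n :: nat and mu :: "nat \<Rightarrow> real" and y :: "nat \<Rightarrow> int"
    and xi :: "nat \<Rightarrow> nat \<Rightarrow> real" and eta :: real and W0 :: "int \<Rightarrow> nat \<Rightarrow> nat \<Rightarrow> real"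
  assumes q_nonneg: "0 \<le> q" and eta_nonneg: "0 \<le> eta"
    and labels: "\<forall>i<n. y i \<in> {1, -1}"
    and noise_orth: "\<forall>i<n. vinner d (xi i) mu = 0"
    and signal_nonzero: "0 < vinner d mu mu"
begin

abbreviation W :: "nat \<Rightarrow> int \<Rightarrow> nat \<Rightarrow> nat \<Rightarrow> real" where
  "W t \<equiv> gd q d m n mu y xi eta W0 t"

definition loss_weight :: "nat \<Rightarrow> nat \<Rightarrow> real" where
  "loss_weight t i = - logloss_deriv (of_int (y i) * netf q d m (W t) mu (y i) (xi i))"

definition signal_gain :: "nat \<Rightarrow> int \<Rightarrow> nat \<Rightarrow> real" where
  "signal_gain t j r = of_int j * (vinner d (W t j r) mu - vinner d (W0 j r) mu)"

definition noise_drift :: "nat \<Rightarrow> int \<Rightarrow> nat \<Rightarrow> nat \<Rightarrow> real" where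
  "noise_drift t j r i = vinner d (W t j r) (xi i) - vinner d (W0 j r) (xi i)"

definition noise_gram :: "nat \<Rightarrow> nat \<Rightarrow> real" where
  "noise_gram i' i = vinner d (xi i') (xi i) / vinner d (xi i') (xi i')"

definition signal_noise_decomposition ::
    "(nat \<Rightarrow> int \<Rightarrow> nat \<Rightarrow> real) \<Rightarrow> (nat \<Rightarrow> int \<Rightarrow> nat \<Rightarrow> nat \<Rightarrow> real) \<Rightarrow> bool" where
  "signal_noise_decomposition \<gamma> \<rho> \<longleftrightarrow> (\<forall>t. \<forall>j\<in>{1,-1}. \<forall>r<m. \<forall>k<d.
     W t j r k = W0 j r k + of_int j * \<gamma> t j r * mu k / (vnorm d mu)\<^sup>2
                 + (\<Sum>i<n. \<rho> t j r i * xi i k / (vnorm d (xi i))\<^sup>2))"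

lemma loss_weight_bounds: "0 < loss_weight t i" "loss_weight t i \<le> 1"
  unfolding loss_weight_def using logloss_deriv_bounds by (auto simp: neg_le_iff_le)

lemma label_square: "i < n \<Longrightarrow> of_int (y i) * of_int (y i) = (1::real)"
  using labels by auto

lemma signal_gain_Suc:
  assumes j: "j \<in> {1, -1}"
  shows "signal_gain (Suc t) j r = signal_gain t j r + eta * vinner d mu mu / (real n * real m) *
     (\<Sum>i<n. loss_weight t i * act_deriv q (vinner d (W t j r) (\<lambda>k. of_int (y i) * mu k)))"
proof -
  let ?a = "\<lambda>i. loss_weight t i * act_deriv q (vinner d (W t j r) (\<lambda>k. of_int (y i) * mu k))"
  have "vinner d (W (Suc t) j r) mu = vinner d (W t j r) mu
      + of_int j * (eta * vinner d mu mu / (real n * real m) * (\<Sum>i<n. ?a i))"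
  proof -
    have "(\<Sum>i<n. logloss_deriv (of_int (y i) * netf q d m (W t) mu (y i) (xi i)) * of_int (y i) * of_int j / real m
        * (act_deriv q (vinner d (W t j r) (\<lambda>k. of_int (y i) * mu k)) * of_int (y i) * vinner d mu mu
           + act_deriv q (vinner d (W t j r) (xi i)) * vinner d (xi i) mu))
        = (\<Sum>i<n. - (of_int j * vinner d mu mu / real m) * ?a i)"
      using noise_orth label_square unfolding loss_weight_def
      by (intro sum.cong) (auto simp: algebra_simps)
    then show ?thesis
      unfolding vinner_gd_Suc by (simp add: sum_negf flip: sum_distrib_left sum_divide_distrib)
  qed
  moreover have "of_int j * of_int j = (1::real)" using j by auto
  ultimately show ?thesis
    unfolding signal_gain_def by (simp add: sum_distrib_left[symmetric] algebra_simps)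
qed

lemma noise_drift_Suc:
  assumes i0: "i0 < n"
  shows "noise_drift (Suc t) j r i0 = noise_drift t j r i0 + eta / (real n * real m) *
     (\<Sum>i<n. loss_weight t i * of_int (y i) * of_int j * act_deriv q (vinner d (W t j r) (xi i))
              * vinner d (xi i) (xi i0))"
proof -
  have "vinner d mu (xi i0) = 0" using noise_orth i0 vinner_commute by metis
  then show ?thesis
    unfolding noise_drift_def vinner_gd_Suc loss_weight_def
    by (simp add: sum_distrib_left sum_divide_distrib sum_negf algebra_simps)
qed

lemma signal_gain_mono:
  assumes j: "j \<in> {1, -1}" and "t \<le> t'"
  shows "signal_gain t j r \<le> signal_gain t' j r"
proof (rule lift_Suc_mono_le[OF _ \<open>t \<le> t'\<close>])
  fix t
  have "0 \<le> eta * vinner d mu mu / (real n * real m) *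
      (\<Sum>i<n. loss_weight t i * act_deriv q (vinner d (W t j r) (\<lambda>k. of_int (y i) * mu k)))"
    using eta_nonneg signal_nonzero q_nonneg loss_weight_bounds
    by (intro mult_nonneg_nonneg divide_nonneg_nonneg sum_nonneg act_deriv_nonneg) (auto simp: less_imp_le)
  then show "signal_gain t j r \<le> signal_gain (Suc t) j r"
    using signal_gain_Suc[OF j] by simp
qed

lemma decomposition_vinner:
  assumes "signal_noise_decomposition \<gamma> \<rho>" and "j \<in> {1, -1}" and "r < m"
  shows "vinner d (W t j r) u = vinner d (W0 j r) u + of_int j * \<gamma> t j r * vinner d mu u / (vnorm d mu)\<^sup>2
           + (\<Sum>i<n. \<rho> t j r i * vinner d (xi i) u / (vnorm d (xi i))\<^sup>2)"
  using assms unfolding signal_noise_decomposition_def by (intro vinner_decomposition) auto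

lemma decomposition_signal_coefficient:
  assumes dec: "signal_noise_decomposition \<gamma> \<rho>" and j: "j \<in> {1, -1}" and r: "r < m"
  shows "\<gamma> t j r = signal_gain t j r"
proof -
  have "(\<Sum>i<n. \<rho> t j r i * vinner d (xi i) mu / (vnorm d (xi i))\<^sup>2) = 0"
    using noise_orth by (intro sum.neutral) auto
  then have "vinner d (W t j r) mu = vinner d (W0 j r) mu + of_int j * \<gamma> t j r"
    using decomposition_vinner[OF dec j r, of t mu] signal_nonzero by (simp add: vnorm_square)
  then show ?thesis
    unfolding signal_gain_def using j by auto
qed

lemma decomposition_noise_coefficients:
  assumes dec: "signal_noise_decomposition \<gamma> \<rho>" and j: "j \<in> {1, -1}" and r: "r < m"
    and i0: "i0 < n"
  shows "(\<Sum>i<n. \<rho> t j r i * noise_gram i i0) = noise_drift t j r i0"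
proof -
  have "vinner d mu (xi i0) = 0" using noise_orth i0 vinner_commute by metis
  then show ?thesis
    using decomposition_vinner[OF dec j r, of t "xi i0"]
    unfolding noise_drift_def noise_gram_def by (simp add: vnorm_square)
qed

end

section \<open>The first phase under abstract bounds\<close>

(* Xi and Lambda bound the initial noise and signal inner products, a/2 is the initial signal
   of the best neuron, s is the allowed drift of the noise inner products, tau the signal target
   and N the number of steps. *)
locale gd_phase1 = gd_setting +
  fixes D \<Xi> s \<Lambda> a \<tau> :: real and N :: nat
  assumes q_ge_2: "2 \<le> q" and n_pos: "1 \<le> n" and D_pos: "0 < D" and a_pos: "0 < a"
    and noise_norm: "\<And>i. i < n \<Longrightarrow> D/2 \<le> vinner d (xi i) (xi i) \<and> vinner d (xi i) (xi i) \<le> 3*D/2"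
    and noise_cross: "\<And>i i'. i < n \<Longrightarrow> i' < n \<Longrightarrow> i \<noteq> i' \<Longrightarrow> \<bar>vinner d (xi i) (xi i')\<bar> \<le> D / (4 * real n)"
    and init_noise: "\<And>j r i. j \<in> {1, -1} \<Longrightarrow> r < m \<Longrightarrow> i < n \<Longrightarrow> \<bar>vinner d (W0 j r) (xi i)\<bar> \<le> \<Xi>"
    and init_signal: "\<And>j r. j \<in> {1, -1} \<Longrightarrow> r < m \<Longrightarrow> \<bar>vinner d (W0 j r) mu\<bar> \<le> \<Lambda>"
    and init_signal_max: "\<And>j. j \<in> {1, -1} \<Longrightarrow> \<exists>r<m. a/2 \<le> of_int j * vinner d (W0 j r) mu"
    and label_balance: "\<And>j. j \<in> {1, -1} \<Longrightarrow> real n / 4 \<le> real (card {i. i < n \<and> y i = j})"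
    and noise_room: "\<Xi> + s \<le> 1/2"
    and signal_room: "\<Lambda> + \<tau> \<le> 1/2"
    and noise_budget: "real N * (eta / (real n * real m) * act_deriv q (\<Xi> + s) * (2 * D)) \<le> s"
    and signal_budget:
      "\<Lambda> + \<tau> \<le> a/2 * (1 + eta * q * vinner d mu mu * (a/2) powr (q-2) / (16 * real m)) ^ N"
begin

abbreviation drift_rate :: real where
  "drift_rate \<equiv> eta / (real n * real m) * act_deriv q (\<Xi> + s) * (2 * D)"

abbreviation growth_rate :: real where
  "growth_rate \<equiv> eta * q * vinner d mu mu * (a/2) powr (q-2) / (16 * real m)"

lemma noise_cross_sum:
  assumes i0: "i0 < n"
  shows "(\<Sum>i<n. \<bar>vinner d (xi i) (xi i0)\<bar>) \<le> 2 * D"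
proof -
  have "(\<Sum>i<n. \<bar>vinner d (xi i) (xi i0)\<bar>) \<le> (\<Sum>i<n. (if i = i0 then 3*D/2 else 0) + D / (4 * real n))"
  proof (intro sum_mono)
    fix i assume i: "i \<in> {..<n}"
    have "0 \<le> D / (4 * real n)" using D_pos by simp
    moreover have "\<bar>vinner d (xi i0) (xi i0)\<bar> \<le> 3*D/2"
      using noise_norm[OF i0] D_pos by (simp add: abs_of_nonneg)
    ultimately show "\<bar>vinner d (xi i) (xi i0)\<bar> \<le> (if i = i0 then 3*D/2 else 0) + D / (4 * real n)"
      using noise_cross[of i i0] i i0 D_pos by (cases "i = i0") (auto intro: add_increasing2)
  qed
  also have "\<dots> = 3*D/2 + D/4"
    using i0 n_pos by (simp add: sum.distrib)
  finally show ?thesis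
    using D_pos by simp
qed

lemma noise_drift_step:
  assumes i0: "i0 < n" and j: "j \<in> {1, -1}"
    and below: "\<And>i. i < n \<Longrightarrow> vinner d (W t j r) (xi i) \<le> \<Xi> + s"
  shows "\<bar>noise_drift (Suc t) j r i0 - noise_drift t j r i0\<bar> \<le> drift_rate"
proof -
  have term_bound: "\<bar>loss_weight t i * of_int (y i) * of_int j * act_deriv q (vinner d (W t j r) (xi i))
      * vinner d (xi i) (xi i0)\<bar> \<le> act_deriv q (\<Xi> + s) * \<bar>vinner d (xi i) (xi i0)\<bar>" if i: "i < n" for i
  proof -
    have "\<bar>of_int (y i) :: real\<bar> = 1" "\<bar>of_int j :: real\<bar> = 1" using labels i j by auto
    moreover have "\<bar>loss_weight t i\<bar> \<le> 1" using loss_weight_bounds[of t i] by (simp add: abs_of_pos)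
    moreover have "\<bar>act_deriv q (vinner d (W t j r) (xi i))\<bar> \<le> act_deriv q (\<Xi> + s)"
      using act_deriv_mono[OF _ below[OF i]] act_deriv_nonneg q_ge_2 by simp
    ultimately have "\<bar>loss_weight t i\<bar> * \<bar>act_deriv q (vinner d (W t j r) (xi i))\<bar> \<le> 1 * act_deriv q (\<Xi> + s)"
      by (intro mult_mono) auto
    with \<open>\<bar>of_int (y i) :: real\<bar> = 1\<close> \<open>\<bar>of_int j :: real\<bar> = 1\<close> show ?thesis
      by (simp add: abs_mult mult_right_mono)
  qed
  have "\<bar>noise_drift (Suc t) j r i0 - noise_drift t j r i0\<bar> = eta / (real n * real m) *
      \<bar>\<Sum>i<n. loss_weight t i * of_int (y i) * of_int j * act_deriv q (vinner d (W t j r) (xi i))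
              * vinner d (xi i) (xi i0)\<bar>"
    unfolding noise_drift_Suc[OF i0] using eta_nonneg by (simp add: abs_mult)
  also have "\<dots> \<le> eta / (real n * real m) * (\<Sum>i<n. act_deriv q (\<Xi> + s) * \<bar>vinner d (xi i) (xi i0)\<bar>)"
    using eta_nonneg term_bound by (intro mult_left_mono order.trans[OF sum_abs] sum_mono) auto
  also have "\<dots> \<le> drift_rate"
    using noise_cross_sum[OF i0] eta_nonneg act_deriv_nonneg[of q "\<Xi> + s"] q_nonneg
    by (auto simp: sum_distrib_left[symmetric] mult.assoc intro!: divide_right_mono mult_left_mono)
  finally show ?thesis .
qed

lemma noise_drift_linear:
  assumes "t \<le> N" and "j \<in> {1, -1}" and "r < m" and "i < n"
  shows "\<bar>noise_drift t j r i\<bar> \<le> real t * drift_rate"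
  using assms
proof (induction t arbitrary: i)
  case 0
  then show ?case unfolding noise_drift_def by simp
next
  case (Suc t)
  have "real t * drift_rate \<le> real N * drift_rate"
    using Suc.prems eta_nonneg D_pos act_deriv_nonneg[of q "\<Xi> + s"] q_nonneg by (intro mult_right_mono) auto
  then have "\<bar>noise_drift t j r i'\<bar> \<le> s" if "i' < n" for i'
    using Suc that noise_budget by fastforce
  then have "vinner d (W t j r) (xi i') \<le> \<Xi> + s" if "i' < n" for i'
    using init_noise[OF Suc.prems(2,3) that] that unfolding noise_drift_def by fastforce
  then have "\<bar>noise_drift (Suc t) j r i - noise_drift t j r i\<bar> \<le> drift_rate"
    using noise_drift_step Suc.prems by blast
  moreover have "\<bar>noise_drift t j r i\<bar> \<le> real t * drift_rate"
    using Suc by simp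
  ultimately show ?case
    unfolding of_nat_Suc distrib_right by linarith
qed

lemma noise_drift_le:
  assumes "t \<le> N" and "j \<in> {1, -1}" and "r < m" and "i < n"
  shows "\<bar>noise_drift t j r i\<bar> \<le> s"
proof -
  have "real t * drift_rate \<le> real N * drift_rate"
    using assms eta_nonneg D_pos act_deriv_nonneg[of q "\<Xi> + s"] q_nonneg by (intro mult_right_mono) auto
  then show ?thesis
    using noise_drift_linear[OF assms] noise_budget by linarith
qed

lemma noise_vinner_le:
  assumes "t \<le> N" and "j \<in> {1, -1}" and "r < m" and "i < n"
  shows "vinner d (W t j r) (xi i) \<le> \<Xi> + s"
  using noise_drift_le[OF assms] init_noise[OF assms(2-4)] unfolding noise_drift_def by linarith

lemma netF_le_one:
  assumes t: "t \<le> N" and j: "j \<in> {1, -1}" and i: "i < n" and yi: "y i = j"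
    and small: "\<And>r. r < m \<Longrightarrow> signal_gain t j r < \<tau>"
  shows "netF q d m (W t) j mu (y i) (xi i) \<le> 1"
proof -
  have "act q (vinner d (W t j r) (\<lambda>k. of_int (y i) * mu k)) + act q (vinner d (W t j r) (xi i)) \<le> 1/2 + 1/2"
    if r: "r < m" for r
  proof (intro add_mono act_le_half)
    have "\<bar>of_int j * vinner d (W0 j r) mu\<bar> \<le> \<Lambda>"
      using init_signal[OF j r] j by (auto simp: abs_mult)
    then have "vinner d (W t j r) (\<lambda>k. of_int (y i) * mu k) \<le> \<Lambda> + \<tau>"
      using small[OF r] j unfolding vinner_scale_right yi signal_gain_def by (auto simp: algebra_simps)
    then show "vinner d (W t j r) (\<lambda>k. of_int (y i) * mu k) \<le> 1/2"
      using signal_room by linarith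
    show "vinner d (W t j r) (xi i) \<le> 1/2"
      using noise_vinner_le[OF t j r i] noise_room by linarith
  qed (use q_ge_2 in auto)
  then have "(\<Sum>r<m. act q (vinner d (W t j r) (\<lambda>k. of_int (y i) * mu k)) + act q (vinner d (W t j r) (xi i)))
      \<le> (\<Sum>r<m. 1)"
    by (intro sum_mono) simp
  then show ?thesis
    unfolding netF_def by (simp add: divide_le_eq)
qed

lemma loss_weight_ge_quarter:
  assumes t: "t \<le> N" and j: "j \<in> {1, -1}" and i: "i < n" and yi: "y i = j"
    and small: "\<And>r. r < m \<Longrightarrow> signal_gain t j r < \<tau>"
  shows "1/4 \<le> loss_weight t i"
proof -
  have netF_nonneg: "0 \<le> netF q d m (W t) j' mu (y i) (xi i)" for j'
    unfolding netF_def by (intro mult_nonneg_nonneg sum_nonneg add_nonneg_nonneg act_nonneg) auto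
  have "of_int (y i) * netf q d m (W t) mu (y i) (xi i) \<le> 1"
  proof (cases "j = 1")
    case True
    then show ?thesis
      using netF_le_one[OF assms] netF_nonneg[of "-1"] yi unfolding netf_def by simp
  next
    case False
    then have "j = -1" using j by simp
    then show ?thesis
      using netF_le_one[OF assms] netF_nonneg[of 1] yi unfolding netf_def by simp
  qed
  then show ?thesis
    unfolding loss_weight_def using logloss_deriv_le_quarter by fastforce
qed

lemma signal_gradient_ge:
  assumes t: "t \<le> N" and j: "j \<in> {1, -1}" and small: "\<And>r. r < m \<Longrightarrow> signal_gain t j r < \<tau>"
    and x: "a/2 \<le> of_int j * vinner d (W t j r) mu"
  shows "real n / 16 * q * (a/2) powr (q-2) * (of_int j * vinner d (W t j r) mu)
    \<le> (\<Sum>i<n. loss_weight t i * act_deriv q (vinner d (W t j r) (\<lambda>k. of_int (y i) * mu k)))"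
proof -
  let ?x = "of_int j * vinner d (W t j r) mu"
  let ?S = "{i. i < n \<and> y i = j}"
  have x_pos: "0 < ?x" using x a_pos by linarith
  have "(a/2) powr (q-2) * ?x \<le> ?x powr (q-2) * ?x"
    using x a_pos q_ge_2 x_pos by (intro mult_right_mono powr_mono2) auto
  also have "\<dots> = ?x powr (q-1)"
    using x_pos powr_add[of ?x "q-2" 1] by simp
  finally have "real n / 4 * (1/4 * (q * ((a/2) powr (q-2) * ?x))) \<le> real (card ?S) * (1/4 * (q * ?x powr (q-1)))"
    using label_balance[OF j] q_ge_2 a_pos x_pos by (intro mult_mono) auto
  also have "\<dots> = (\<Sum>i\<in>?S. 1/4 * act_deriv q ?x)"
    using x_pos unfolding act_deriv_def by simp
  also have "\<dots> \<le> (\<Sum>i\<in>?S. loss_weight t i * act_deriv q (vinner d (W t j r) (\<lambda>k. of_int (y i) * mu k)))"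
  proof (intro sum_mono mult_mono)
    fix i assume "i \<in> ?S"
    then show "1/4 \<le> loss_weight t i"
      using loss_weight_ge_quarter[OF t j _ _ small] by auto
    show "act_deriv q ?x \<le> act_deriv q (vinner d (W t j r) (\<lambda>k. of_int (y i) * mu k))"
      using \<open>i \<in> ?S\<close> by (simp add: vinner_scale_right)
  qed (use act_deriv_nonneg q_nonneg loss_weight_bounds in \<open>auto simp: less_imp_le\<close>)
  also have "\<dots> \<le> (\<Sum>i<n. loss_weight t i * act_deriv q (vinner d (W t j r) (\<lambda>k. of_int (y i) * mu k)))"
    using q_nonneg
    by (intro sum_mono2 mult_nonneg_nonneg act_deriv_nonneg less_imp_le[OF loss_weight_bounds(1)]) auto
  finally show ?thesis by (simp add: algebra_simps)
qed

lemma growth_rate_nonneg: "0 \<le> growth_rate"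
  using eta_nonneg q_nonneg signal_nonzero by simp

lemma signal_growth_step:
  assumes t: "t \<le> N" and j: "j \<in> {1, -1}" and small: "\<And>r. r < m \<Longrightarrow> signal_gain t j r < \<tau>"
    and x: "a/2 \<le> of_int j * vinner d (W t j r) mu"
  shows "(1 + growth_rate) * (of_int j * vinner d (W t j r) mu) \<le> of_int j * vinner d (W (Suc t) j r) mu"
proof -
  let ?x = "of_int j * vinner d (W t j r) mu"
  have "growth_rate * ?x = eta * vinner d mu mu / (real n * real m) * (real n / 16 * q * (a/2) powr (q-2) * ?x)"
    using n_pos by (simp add: field_simps)
  also have "\<dots> \<le> eta * vinner d mu mu / (real n * real m) *
      (\<Sum>i<n. loss_weight t i * act_deriv q (vinner d (W t j r) (\<lambda>k. of_int (y i) * mu k)))"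
    using eta_nonneg signal_nonzero by (intro mult_left_mono signal_gradient_ge[OF assms]) auto
  also have "\<dots> = signal_gain (Suc t) j r - signal_gain t j r"
    unfolding signal_gain_Suc[OF j] by simp
  also have "\<dots> = of_int j * vinner d (W (Suc t) j r) mu - ?x"
    unfolding signal_gain_def by (simp add: algebra_simps)
  finally show ?thesis by (simp add: algebra_simps)
qed

lemma signal_gain_reaches:
  assumes j: "j \<in> {1, -1}"
  shows "\<exists>r<m. \<tau> \<le> signal_gain N j r"
proof (rule ccontr)
  assume "\<not> ?thesis"
  then have small: "signal_gain t j r < \<tau>" if "t \<le> N" "r < m" for t r
    using signal_gain_mono[OF j that(1), of r] that(2) by fastforce
  obtain r where r: "r < m" and init: "a/2 \<le> of_int j * vinner d (W0 j r) mu"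
    using init_signal_max[OF j] by blast
  have grows: "a/2 * (1 + growth_rate) ^ t \<le> of_int j * vinner d (W t j r) mu" if "t \<le> N" for t
    using that
  proof (induction t)
    case 0
    then show ?case using init by simp
  next
    case (Suc t)
    then have IH: "a/2 * (1 + growth_rate) ^ t \<le> of_int j * vinner d (W t j r) mu" by simp
    moreover have "a/2 \<le> a/2 * (1 + growth_rate) ^ t"
      using growth_rate_nonneg a_pos by simp
    ultimately have "(1 + growth_rate) * (of_int j * vinner d (W t j r) mu) \<le> of_int j * vinner d (W (Suc t) j r) mu"
      using Suc.prems small j by (intro signal_growth_step) auto
    moreover have "a/2 * (1 + growth_rate) ^ Suc t \<le> (1 + growth_rate) * (of_int j * vinner d (W t j r) mu)"
      using IH growth_rate_nonneg by (simp add: mult.left_commute mult_left_mono)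
    ultimately show ?case by linarith
  qed
  have "\<bar>of_int j * vinner d (W0 j r) mu\<bar> \<le> \<Lambda>"
    using init_signal[OF j r] j by (auto simp: abs_mult)
  then have "of_int j * vinner d (W N j r) mu < \<Lambda> + \<tau>"
    using small[OF order.refl r] unfolding signal_gain_def by (simp add: algebra_simps)
  then show False
    using grows[OF order.refl] signal_budget by simp
qed

lemma noise_gram_diag: "i < n \<Longrightarrow> noise_gram i i = 1"
  using noise_norm D_pos unfolding noise_gram_def by force

lemma noise_gram_off_diag: "i0 < n \<Longrightarrow> (\<Sum>i'\<in>{..<n}-{i0}. \<bar>noise_gram i' i0\<bar>) \<le> 1/2"
proof -
  assume i0: "i0 < n"
  have "\<bar>noise_gram i' i0\<bar> \<le> 1 / (2 * real n)" if "i' \<in> {..<n}-{i0}" for i'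
  proof -
    have norm: "D/2 \<le> vinner d (xi i') (xi i')" and cross: "\<bar>vinner d (xi i') (xi i0)\<bar> \<le> D / (4 * real n)"
      using noise_norm noise_cross[of i' i0] that i0 by auto
    then have "\<bar>noise_gram i' i0\<bar> = \<bar>vinner d (xi i') (xi i0)\<bar> / vinner d (xi i') (xi i')"
      using D_pos unfolding noise_gram_def by (simp add: abs_divide)
    also have "\<dots> \<le> (D / (4 * real n)) / (D/2)"
      using norm cross D_pos by (intro frac_le) auto
    also have "\<dots> = 1 / (2 * real n)"
      using D_pos by (simp add: field_simps)
    finally show ?thesis .
  qed
  then have "(\<Sum>i'\<in>{..<n}-{i0}. \<bar>noise_gram i' i0\<bar>) \<le> (\<Sum>i'\<in>{..<n}-{i0}. 1 / (2 * real n))"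
    by (rule sum_mono)
  also have "\<dots> = real (n - 1) * (1 / (2 * real n))"
    using i0 by (simp add: card_Diff_singleton)
  also have "\<dots> \<le> 1/2"
    using n_pos by (simp add: field_simps)
  finally show ?thesis .
qed

lemma noise_coefficient_bound:
  assumes dec: "signal_noise_decomposition \<gamma> \<rho>" and t: "t \<le> N" and j: "j \<in> {1, -1}" and r: "r < m"
    and i: "i < n"
  shows "\<bar>\<rho> t j r i\<bar> \<le> 2 * s"
proof -
  have "\<bar>\<rho> t j r i\<bar> \<le> s / (1 - 1/2)"
    by (rule diagonally_dominant_solution_bound[of n "\<rho> t j r" noise_gram "noise_drift t j r"])
      (use decomposition_noise_coefficients[OF dec j r] noise_gram_diag noise_gram_off_diag
         noise_drift_le[OF t j r] i in auto)
  then show ?thesis by simp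
qed

end

section \<open>The parameter regime of the theorem\<close>

(* The factors are 2 powr (q + 3) from the number of steps, 2 from the noise cross sum
   bound 2 D, and q * 3 powr (q - 1) from the activation derivative on the noise range. *)
definition noise_budget_const :: "real \<Rightarrow> real" where
  "noise_budget_const q = 2 powr (q + 4) * q * 3 powr (q - 1)"

(* The factor 2 powr (q + 1) compensates L powr (q + 1) >= (1/2) powr (q + 1), which is all
   that is known about the logarithmic factor L before L >= 1 is established. *)
definition phase1_const :: "real \<Rightarrow> real" where
  "phase1_const q = 2 powr (q + 1) * noise_budget_const q"

lemma noise_budget_const_ge:
  assumes "2 < q"
  shows "2 powr (q + 4) \<le> noise_budget_const q" and "q \<le> noise_budget_const q"
proof -
  have "1 \<le> 3 powr (q - 1)" and "1 \<le> 2 powr (q + 4)"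
    using assms by (auto intro: ge_one_powr_ge_zero)
  moreover have "1 \<le> q" using assms by simp
  ultimately have "1 \<le> q * 3 powr (q - 1)" and "1 \<le> 2 powr (q + 4) * 3 powr (q - 1)"
    using mult_mono[of 1 q 1 "3 powr (q - 1)"] mult_mono[of 1 "2 powr (q + 4)" 1 "3 powr (q - 1)"] by auto
  then show "2 powr (q + 4) \<le> noise_budget_const q" and "q \<le> noise_budget_const q"
    using assms unfolding noise_budget_const_def by (simp_all add: mult.assoc mult.left_commute[of q])
qed

lemma noise_budget_const_ge_64: "2 < q \<Longrightarrow> 64 \<le> noise_budget_const q"
proof -
  assume q: "2 < q"
  have "(64::real) = 2 powr 6" by simp
  also have "\<dots> \<le> 2 powr (q + 4)" using q by (intro powr_mono) auto
  finally show ?thesis using noise_budget_const_ge(1)[OF q] by linarith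
qed

lemma phase1_const_ge: "2 < q \<Longrightarrow> noise_budget_const q \<le> phase1_const q"
  unfolding phase1_const_def
  using noise_budget_const_ge(2)[of q] ge_one_powr_ge_zero[of 2 "q + 1"]
  by (simp add: mult_le_cancel_right1)

lemma phase1_const_half_powr: "phase1_const q * (1/2) powr (q + 1) = noise_budget_const q"
  unfolding phase1_const_def by (simp add: powr_divide)

locale phase1_scaling =
  fixes q :: real and d m n :: nat and \<delta> \<sigma>p \<sigma>0 \<eta> :: real and mu :: "nat \<Rightarrow> real"
    and y :: "nat \<Rightarrow> int" and xi :: "nat \<Rightarrow> nat \<Rightarrow> real" and W0 :: "int \<Rightarrow> nat \<Rightarrow> nat \<Rightarrow> real"
  assumes q_gt_2: "2 < q" and d_pos: "1 \<le> d" and m_pos: "1 \<le> m" and n_pos: "1 \<le> n"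
    and \<delta>_pos: "0 < \<delta>" and \<delta>_lt_1: "\<delta> < 1" and \<sigma>p_pos: "0 < \<sigma>p" and \<sigma>0_pos: "0 < \<sigma>0"
    and \<eta>_pos: "0 < \<eta>" and mu_pos: "0 < vnorm d mu"
    and labels: "\<forall>i<n. y i \<in> {1, -1}"
    and noise_orth: "\<forall>i<n. vinner d (xi i) mu = 0"
    and prelim: "E_prelim d m n \<delta> \<sigma>p \<sigma>0 mu y xi W0"
    and dim_large: "phase1_const q * ln (real m * real n * real d / \<delta>) powr (q + 1)
        * real m powr max 2 (4 / (q - 2)) * real n powr max 4 ((2 * q - 2) / (q - 2)) \<le> real d"
    and step_small: "\<eta> \<le> min (1 / (vnorm d mu)\<^sup>2) (1 / (\<sigma>p\<^sup>2 * real d))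
        / (phase1_const q * ln (real m * real n * real d / \<delta>) powr (q + 1))"
    and init_large: "phase1_const q * ln (real m * real n * real d / \<delta>) powr (q + 1) * real n / sqrt (real d)
        * min (1 / (\<sigma>p * sqrt (real d))) (1 / vnorm d mu) \<le> \<sigma>0"
    and init_small: "\<sigma>0 \<le> real m powr (- 2 / (q - 2)) * real n powr - max (1 / (q - 2)) 1
        * min (1 / (\<sigma>p * sqrt (real d))) (1 / vnorm d mu)
        / (phase1_const q * ln (real m * real n * real d / \<delta>) powr (q + 1))"
    and snr_large: "phase1_const q * ln (real m * real n * real d / \<delta>) powr (q + 1)
        \<le> real n * (vnorm d mu / (\<sigma>p * sqrt (real d))) powr q"
begin

definition L :: real where
  "L = ln (real m * real n * real d / \<delta>)"

definition K :: real where
  "K = phase1_const q * L powr (q + 1)"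

lemma scaled_hypotheses:
  "K * real m powr max 2 (4 / (q - 2)) * real n powr max 4 ((2 * q - 2) / (q - 2)) \<le> real d"
  "\<eta> \<le> min (1 / (vnorm d mu)\<^sup>2) (1 / (\<sigma>p\<^sup>2 * real d)) / K"
  "K * real n / sqrt (real d) * min (1 / (\<sigma>p * sqrt (real d))) (1 / vnorm d mu) \<le> \<sigma>0"
  "\<sigma>0 \<le> real m powr (- 2 / (q - 2)) * real n powr - max (1 / (q - 2)) 1
      * min (1 / (\<sigma>p * sqrt (real d))) (1 / vnorm d mu) / K"
  "K \<le> real n * (vnorm d mu / (\<sigma>p * sqrt (real d))) powr q"
  unfolding K_def L_def using dim_large step_small init_large init_small snr_large by simp_all

lemma noise_norm: "i < n \<Longrightarrow> \<sigma>p\<^sup>2 * real d / 2 \<le> vinner d (xi i) (xi i) \<and> vinner d (xi i) (xi i) \<le> 3 * \<sigma>p\<^sup>2 * real d / 2"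
  using prelim unfolding E_prelim_def vnorm_square by blast

(* For d = 1 every noise patch, being orthogonal to mu, would vanish. *)
lemma dim_ge_2: "2 \<le> d"
proof (rule ccontr)
  assume "\<not> 2 \<le> d"
  then have d1: "d = 1" using d_pos by simp
  then have "mu 0 \<noteq> 0"
    using mu_pos unfolding vnorm_def vinner_def by auto
  then have "xi 0 0 = 0"
    using noise_orth n_pos d1 unfolding vinner_def by auto
  then show False
    using noise_norm[of 0] n_pos d1 \<sigma>p_pos unfolding vinner_def by simp
qed

lemma ln_le_L:
  assumes "0 < x" and "x \<le> real m * real n * real d"
  shows "ln (x / \<delta>) \<le> L"
  unfolding L_def using assms \<delta>_pos by (simp add: divide_right_mono)

lemma mn_ge_1: "1 \<le> real m * real n"
  using m_pos n_pos mult_mono[of 1 "real m" 1 "real n"] by simp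

lemma ln_d_le_L: "ln (real d) \<le> L"
proof -
  have "ln (real d) \<le> ln (real d / \<delta>)"
    using d_pos \<delta>_pos \<delta>_lt_1 by (simp add: ln_div)
  also have "\<dots> \<le> L"
    using mn_ge_1 d_pos by (intro ln_le_L) (auto simp: mult_le_cancel_right1)
  finally show ?thesis .
qed

lemma phase1_const_ge_64: "64 \<le> phase1_const q"
  using phase1_const_ge[OF q_gt_2] noise_budget_const_ge_64[OF q_gt_2] by linarith

lemma phase1_const_pos: "0 < phase1_const q"
  using phase1_const_ge_64 by linarith

lemma K_nonneg: "0 \<le> K"
  unfolding K_def using phase1_const_pos by simp

lemma dim_ge_K_n2: "K * (real n)\<^sup>2 \<le> real d"
proof -
  have "1 \<le> real m powr max 2 (4 / (q - 2))"
    using m_pos by (intro ge_one_powr_ge_zero) auto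
  moreover have "(real n)\<^sup>2 \<le> real n powr max 4 ((2 * q - 2) / (q - 2))"
    using n_pos powr_mono[of 2 "max 4 ((2 * q - 2) / (q - 2))" "real n"] by (simp add: powr_numeral)
  ultimately have "K * 1 * (real n)\<^sup>2 \<le> K * real m powr max 2 (4 / (q - 2)) * real n powr max 4 ((2 * q - 2) / (q - 2))"
    using K_nonneg by (intro mult_mono mult_left_mono) auto
  then show ?thesis using scaled_hypotheses(1) by linarith
qed

lemma L_ge_1: "1 \<le> L"
proof -
  have "ln (1/2::real) \<le> 1/2 - 1" by (rule ln_le_minus_one) simp
  then have "1/2 \<le> ln (2::real)" by (simp add: ln_div)
  also have "\<dots> \<le> ln (real d)" using dim_ge_2 by simp
  also have "\<dots> \<le> L" by (rule ln_d_le_L)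
  finally have "(1/2) powr (q + 1) \<le> L powr (q + 1)"
    using q_gt_2 by (intro powr_mono2) auto
  then have "noise_budget_const q \<le> K"
    unfolding K_def using phase1_const_pos by (simp flip: phase1_const_half_powr)
  also have "K \<le> K * (real n)\<^sup>2"
    using n_pos K_nonneg by (simp add: mult_le_cancel_left1 one_le_power)
  also have "\<dots> \<le> real d" by (rule dim_ge_K_n2)
  finally have "3 \<le> real d" using noise_budget_const_ge_64[OF q_gt_2] by linarith
  have "1 \<le> ln (3::real)" using exp_le by (simp add: ln_ge_iff)
  also have "\<dots> \<le> ln (real d)" using \<open>3 \<le> real d\<close> by simp
  also have "\<dots> \<le> L" by (rule ln_d_le_L)
  finally show ?thesis .
qed

lemma K_ge: "phase1_const q * L \<le> K" "phase1_const q \<le> K"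
proof -
  have "L = L powr 1" using L_ge_1 by simp
  also have "\<dots> \<le> L powr (q + 1)" using L_ge_1 q_gt_2 by (intro powr_mono) auto
  finally show CL: "phase1_const q * L \<le> K"
    unfolding K_def using phase1_const_pos by (intro mult_left_mono) auto
  have "phase1_const q * 1 \<le> phase1_const q * L"
    using L_ge_1 phase1_const_pos by (intro mult_left_mono) auto
  with CL show "phase1_const q \<le> K" by simp
qed

lemma K_pos: "0 < K"
  unfolding K_def using phase1_const_pos L_ge_1 by simp

lemma dim_ge_L_n2: "64 * L * (real n)\<^sup>2 \<le> real d"
proof -
  have "64 * L \<le> phase1_const q * L"
    using phase1_const_ge_64 L_ge_1 by (intro mult_right_mono) auto
  also have "\<dots> \<le> K" by (rule K_ge)
  finally have "64 * L * (real n)\<^sup>2 \<le> K * (real n)\<^sup>2" by (intro mult_right_mono) auto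
  with dim_ge_K_n2 show ?thesis by linarith
qed

definition noise_scale :: real where
  "noise_scale = \<sigma>0 * (\<sigma>p * sqrt (real d))"

definition signal_scale :: real where
  "signal_scale = \<sigma>0 * vnorm d mu"

lemma scales_pos: "0 < noise_scale" "0 < signal_scale"
  unfolding noise_scale_def signal_scale_def using \<sigma>0_pos \<sigma>p_pos d_pos mu_pos by auto

lemma \<sigma>0_le: "\<sigma>0 \<le> min (1 / (\<sigma>p * sqrt (real d))) (1 / vnorm d mu) / K"
proof -
  have "real m powr (- 2 / (q - 2)) \<le> real m powr 0" "real n powr - max (1 / (q - 2)) 1 \<le> real n powr 0"
    using m_pos n_pos q_gt_2 by (intro powr_mono; simp add: divide_nonneg_pos)+
  then have "real m powr (- 2 / (q - 2)) * real n powr - max (1 / (q - 2)) 1 \<le> 1 * 1"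
    using m_pos n_pos by (intro mult_mono) auto
  then have "real m powr (- 2 / (q - 2)) * real n powr - max (1 / (q - 2)) 1
      * min (1 / (\<sigma>p * sqrt (real d))) (1 / vnorm d mu) / K
      \<le> 1 * 1 * min (1 / (\<sigma>p * sqrt (real d))) (1 / vnorm d mu) / K"
    using \<sigma>p_pos mu_pos K_nonneg by (intro divide_right_mono mult_right_mono) auto
  then show ?thesis
    using scaled_hypotheses(4) by simp
qed

lemma scales_le: "noise_scale \<le> 1 / K" "signal_scale \<le> 1 / K"
proof -
  have z: "0 < \<sigma>p * sqrt (real d)" using \<sigma>p_pos d_pos by simp
  have "noise_scale \<le> min (1 / (\<sigma>p * sqrt (real d))) (1 / vnorm d mu) / K * (\<sigma>p * sqrt (real d))"
    unfolding noise_scale_def using \<sigma>0_le z by (intro mult_right_mono) auto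
  also have "\<dots> \<le> 1 / (\<sigma>p * sqrt (real d)) / K * (\<sigma>p * sqrt (real d))"
    using z K_nonneg by (intro mult_right_mono divide_right_mono) auto
  finally show "noise_scale \<le> 1 / K" using z K_pos \<sigma>p_pos d_pos by (simp add: field_simps)
  have "signal_scale \<le> min (1 / (\<sigma>p * sqrt (real d))) (1 / vnorm d mu) / K * vnorm d mu"
    unfolding signal_scale_def using \<sigma>0_le mu_pos by (intro mult_right_mono) auto
  also have "\<dots> \<le> 1 / vnorm d mu / K * vnorm d mu"
    using mu_pos K_nonneg by (intro mult_right_mono divide_right_mono) auto
  finally show "signal_scale \<le> 1 / K" using mu_pos K_pos by (simp add: field_simps)
qed

lemma snr_ge: "1 / real n \<le> min (vnorm d mu / (\<sigma>p * sqrt (real d))) 1"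
proof (cases "1 \<le> vnorm d mu / (\<sigma>p * sqrt (real d))")
  case True
  then show ?thesis using n_pos by simp
next
  case False
  let ?snr = "vnorm d mu / (\<sigma>p * sqrt (real d))"
  have snr_pos: "0 < ?snr" using mu_pos \<sigma>p_pos d_pos by simp
  have "1 \<le> K" using K_ge(2) phase1_const_ge_64 by linarith
  also have "K \<le> real n * ?snr powr q" by (rule scaled_hypotheses(5))
  also have "\<dots> \<le> real n * ?snr powr 1"
    using False snr_pos q_gt_2 by (intro mult_left_mono powr_mono') auto
  also have "\<dots> = real n * ?snr" by (simp only: powr_one[OF less_imp_le[OF snr_pos]])
  finally have "1 / real n \<le> ?snr"
    using n_pos by (simp add: divide_le_eq mult.commute)
  then show ?thesis using n_pos by simp
qed

lemma signal_scale_ge: "1 / sqrt (real d) \<le> signal_scale"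
proof -
  have z: "0 < \<sigma>p * sqrt (real d)" and sd: "0 < sqrt (real d)" using \<sigma>p_pos d_pos by auto
  have "min (1 / (\<sigma>p * sqrt (real d))) (1 / vnorm d mu) * vnorm d mu
      = min (vnorm d mu / (\<sigma>p * sqrt (real d))) 1"
    using mu_pos z by (simp add: min_mult_distrib_right)
  moreover have "K * real n / sqrt (real d) * min (1 / (\<sigma>p * sqrt (real d))) (1 / vnorm d mu) * vnorm d mu
      \<le> signal_scale"
    unfolding signal_scale_def using scaled_hypotheses(3) mu_pos by (intro mult_right_mono) auto
  ultimately have "K * real n / sqrt (real d) * min (vnorm d mu / (\<sigma>p * sqrt (real d))) 1 \<le> signal_scale"
    by (simp only: mult.assoc)
  moreover have "K * real n / sqrt (real d) * (1 / real n) \<le> K * real n / sqrt (real d) * min (vnorm d mu / (\<sigma>p * sqrt (real d))) 1"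
    using snr_ge K_nonneg sd by (intro mult_left_mono) auto
  moreover have "1 / sqrt (real d) \<le> K * real n / sqrt (real d) * (1 / real n)"
    using K_ge(2) phase1_const_ge_64 sd n_pos by (simp add: divide_right_mono)
  ultimately show ?thesis by linarith
qed

lemma \<eta>_signal_le: "\<eta> * vinner d mu mu \<le> 1 / K"
proof -
  have "min (1 / (vnorm d mu)\<^sup>2) (1 / (\<sigma>p\<^sup>2 * real d)) / K \<le> 1 / (vnorm d mu)\<^sup>2 / K"
    using K_nonneg by (intro divide_right_mono) auto
  then have "\<eta> \<le> 1 / (vnorm d mu)\<^sup>2 / K"
    using scaled_hypotheses(2) by linarith
  then have "\<eta> * vinner d mu mu \<le> 1 / (vnorm d mu)\<^sup>2 / K * (vnorm d mu)\<^sup>2"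
    unfolding vnorm_square[symmetric] by (intro mult_right_mono) auto
  then show ?thesis using mu_pos by simp
qed

lemma sqrt_le_L: "0 \<le> x \<Longrightarrow> x \<le> L \<Longrightarrow> sqrt x \<le> L"
proof -
  assume "0 \<le> x" "x \<le> L"
  moreover have "L \<le> L * L" using L_ge_1 by (simp add: mult_le_cancel_left1)
  ultimately have "sqrt x \<le> sqrt (L * L)" by (intro real_sqrt_le_mono) linarith
  then show ?thesis using L_ge_1 by simp
qed

lemma dim_ge_n: "4 * real n \<le> real d" and dim_ge_64: "64 \<le> real d"
proof -
  have "64 * (real n)\<^sup>2 \<le> 64 * L * (real n)\<^sup>2"
    using L_ge_1 by (intro mult_right_mono) auto
  then have n2: "64 * (real n)\<^sup>2 \<le> real d" using dim_ge_L_n2 by linarith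
  have "real n \<le> (real n)\<^sup>2" using n_pos by (simp add: power2_eq_square)
  with n2 show "4 * real n \<le> real d" by linarith
  have "1 \<le> (real n)\<^sup>2" using n_pos by (simp add: one_le_power)
  with n2 show "64 \<le> real d" by linarith
qed

lemma noise_cross_le:
  assumes "i < n" "i' < n" "i \<noteq> i'"
  shows "\<bar>vinner d (xi i) (xi i')\<bar> \<le> \<sigma>p\<^sup>2 * real d / (4 * real n)"
proof -
  have "real n * (4 * real n) \<le> real n * real d"
    using dim_ge_n by (intro mult_left_mono) auto
  also have "\<dots> \<le> real m * (real n * real d)"
    using mult_right_mono[of 1 "real m" "real n * real d"] m_pos by simp
  finally have "ln (4 * (real n)\<^sup>2 / \<delta>) \<le> L"
    using n_pos by (intro ln_le_L) (auto simp: power2_eq_square algebra_simps)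
  then have "real d * ln (4 * (real n)\<^sup>2 / \<delta>) \<le> real d * L"
    by (intro mult_left_mono) auto
  also have "\<dots> \<le> (real d / (8 * real n))\<^sup>2"
  proof -
    have "real d * (64 * L * (real n)\<^sup>2) \<le> real d * real d"
      using dim_ge_L_n2 by (intro mult_left_mono) auto
    then show ?thesis using n_pos by (simp add: power2_eq_square field_simps)
  qed
  finally have "sqrt (real d * ln (4 * (real n)\<^sup>2 / \<delta>)) \<le> sqrt ((real d / (8 * real n))\<^sup>2)"
    by (rule real_sqrt_le_mono)
  also have "\<dots> = real d / (8 * real n)" by simp
  finally have "2 * \<sigma>p\<^sup>2 * sqrt (real d * ln (4 * (real n)\<^sup>2 / \<delta>)) \<le> 2 * \<sigma>p\<^sup>2 * (real d / (8 * real n))"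
    by (intro mult_left_mono) auto
  also have "\<dots> = \<sigma>p\<^sup>2 * real d / (4 * real n)" by simp
  finally have "2 * \<sigma>p\<^sup>2 * sqrt (real d * ln (4 * (real n)\<^sup>2 / \<delta>)) \<le> \<sigma>p\<^sup>2 * real d / (4 * real n)" .
  moreover have "\<bar>vinner d (xi i) (xi i')\<bar> \<le> 2 * \<sigma>p\<^sup>2 * sqrt (real d * ln (4 * (real n)\<^sup>2 / \<delta>))"
    using prelim assms unfolding E_prelim_def by blast
  ultimately show ?thesis by linarith
qed

lemma init_noise_le:
  assumes "j \<in> {1, -1}" "r < m" "i < n"
  shows "\<bar>vinner d (W0 j r) (xi i)\<bar> \<le> 2 * L * noise_scale"
proof -
  have "8 * (real m * real n) \<le> real d * (real m * real n)"
    using dim_ge_64 by (intro mult_right_mono) auto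
  then have "ln (8 * real m * real n / \<delta>) \<le> L"
    using m_pos n_pos by (intro ln_le_L) (auto simp: algebra_simps)
  moreover have "0 \<le> ln (8 * real m * real n / \<delta>)"
    using mn_ge_1 \<delta>_pos \<delta>_lt_1 by (simp add: le_divide_eq)
  ultimately have "2 * sqrt (ln (8 * real m * real n / \<delta>)) * noise_scale \<le> 2 * L * noise_scale"
    using sqrt_le_L scales_pos by (intro mult_right_mono) auto
  moreover have "\<bar>vinner d (W0 j r) (xi i)\<bar>
      \<le> 2 * sqrt (ln (8 * real m * real n / \<delta>)) * \<sigma>0 * \<sigma>p * sqrt (real d)"
    using prelim assms unfolding E_prelim_def by blast
  then have "\<bar>vinner d (W0 j r) (xi i)\<bar> \<le> 2 * sqrt (ln (8 * real m * real n / \<delta>)) * noise_scale"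
    unfolding noise_scale_def by (simp add: mult.assoc)
  ultimately show ?thesis by linarith
qed

lemma init_signal_le:
  assumes "j \<in> {1, -1}" "r < m"
  shows "\<bar>vinner d (W0 j r) mu\<bar> \<le> 2 * L * signal_scale"
proof -
  have "1 * 8 \<le> real n * real d"
    using dim_ge_64 n_pos by (intro mult_mono) auto
  then have "real m * 8 \<le> real m * (real n * real d)"
    by (intro mult_left_mono) auto
  then have "8 * real m \<le> real m * real n * real d"
    by (simp add: algebra_simps)
  then have "ln (8 * real m / \<delta>) \<le> L"
    using m_pos by (intro ln_le_L) auto
  moreover have "0 \<le> ln (8 * real m / \<delta>)"
    using m_pos \<delta>_pos \<delta>_lt_1 by (simp add: le_divide_eq)
  moreover have "L \<le> L * L" using L_ge_1 by (simp add: mult_le_cancel_left1)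
  ultimately have "sqrt (2 * ln (8 * real m / \<delta>)) \<le> sqrt ((2 * L)\<^sup>2)"
    by (intro real_sqrt_le_mono) (simp add: power2_eq_square)
  also have "\<dots> = 2 * L" using L_ge_1 by (simp only: real_sqrt_abs)
  finally have "sqrt (2 * ln (8 * real m / \<delta>)) * signal_scale \<le> 2 * L * signal_scale"
    using scales_pos by (intro mult_right_mono) auto
  moreover have "\<bar>vinner d (W0 j r) mu\<bar> \<le> sqrt (2 * ln (8 * real m / \<delta>)) * \<sigma>0 * vnorm d mu"
    using prelim assms unfolding E_prelim_def by blast
  then have "\<bar>vinner d (W0 j r) mu\<bar> \<le> sqrt (2 * ln (8 * real m / \<delta>)) * signal_scale"
    unfolding signal_scale_def by (simp add: mult.assoc)
  ultimately show ?thesis by linarith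
qed

lemma L_scales_le: "L * noise_scale \<le> 1 / phase1_const q" "L * signal_scale \<le> 1 / phase1_const q"
proof -
  have "L / K \<le> L / (phase1_const q * L)"
    using K_ge(1) K_pos phase1_const_pos L_ge_1 by (intro divide_left_mono) auto
  also have "\<dots> = 1 / phase1_const q" using L_ge_1 by simp
  finally have "L / K \<le> 1 / phase1_const q" .
  moreover have "L * noise_scale \<le> L / K" "L * signal_scale \<le> L / K"
    using scales_le L_ge_1 mult_left_mono by (fastforce simp: divide_inverse)+
  ultimately show "L * noise_scale \<le> 1 / phase1_const q" "L * signal_scale \<le> 1 / phase1_const q"
    by linarith+
qed

lemma phase1_rooms: "2 * L * noise_scale + noise_scale \<le> 1/2" "2 * L * signal_scale + 1 / phase1_const q \<le> 1/2"
proof -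
  have "noise_scale \<le> L * noise_scale" using L_ge_1 scales_pos by simp
  moreover have "1 / phase1_const q \<le> 1/64" using phase1_const_ge_64 by (simp add: divide_simps)
  ultimately show "2 * L * noise_scale + noise_scale \<le> 1/2" "2 * L * signal_scale + 1 / phase1_const q \<le> 1/2"
    using L_scales_le by linarith+
qed

lemma inverse_K_le_1: "1 / K \<le> 1"
  using K_ge(2) phase1_const_ge_64 by simp

definition signal_speed :: real where
  "signal_speed = \<eta> * vinner d mu mu * signal_scale powr (q - 2)"

definition growth_rate :: real where
  "growth_rate = \<eta> * q * vinner d mu mu * (signal_scale / 2) powr (q - 2) / (16 * real m)"

definition phase1_steps :: nat where
  "phase1_steps = nat \<lceil>2 * ln (real d) / growth_rate\<rceil>"

lemma signal_speed_eq: "\<eta> * \<sigma>0 powr (q - 2) * vnorm d mu powr q = signal_speed"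
proof -
  have "vnorm d mu powr q = vnorm d mu powr (q - 2) * vinner d mu mu"
    using mu_pos powr_add[of "vnorm d mu" "q - 2" 2] by (simp add: vnorm_square[symmetric])
  then show ?thesis
    unfolding signal_speed_def signal_scale_def using \<sigma>0_pos mu_pos by (simp add: powr_mult)
qed

lemma signal_speed_bounds: "0 < signal_speed" "signal_speed \<le> 1 / K"
proof -
  have M: "0 < vinner d mu mu" using mu_pos by (simp flip: vnorm_square)
  then show "0 < signal_speed"
    unfolding signal_speed_def using \<eta>_pos scales_pos by simp
  have "signal_scale \<le> 1"
    using scales_le(2) inverse_K_le_1 by linarith
  then have "signal_scale powr (q - 2) \<le> 1"
    using scales_pos q_gt_2 by (intro powr_le1) auto
  then have "signal_speed \<le> \<eta> * vinner d mu mu * 1"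
    unfolding signal_speed_def using \<eta>_pos M by (intro mult_left_mono) auto
  then show "signal_speed \<le> 1 / K" using \<eta>_signal_le by simp
qed

lemma growth_rate_eq: "growth_rate = q * signal_speed / (16 * 2 powr (q - 2) * real m)"
  unfolding growth_rate_def signal_speed_def by (simp add: powr_divide field_simps)

lemma growth_rate_bounds: "0 < growth_rate" "growth_rate \<le> 1/2"
proof -
  have two_powr: "1 \<le> (2::real) powr (q - 2)" using q_gt_2 by (intro ge_one_powr_ge_zero) auto
  show "0 < growth_rate"
    unfolding growth_rate_eq using signal_speed_bounds(1) q_gt_2 m_pos two_powr by simp
  have "q * signal_speed \<le> q * (1 / K)"
    using signal_speed_bounds(2) q_gt_2 by (intro mult_left_mono) auto
  also have "\<dots> \<le> 1"
    using K_ge(2) phase1_const_ge[OF q_gt_2] noise_budget_const_ge(2)[OF q_gt_2] K_pos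
    by (simp add: divide_simps)
  also have "\<dots> \<le> 16 * 2 powr (q - 2) * real m / 2"
    using two_powr m_pos mult_mono[of 1 "2 powr (q - 2)" 1 "real m"] by (simp add: algebra_simps)
  finally show "growth_rate \<le> 1/2"
    unfolding growth_rate_eq using two_powr m_pos by (simp add: divide_simps)
qed

lemma phase1_steps_growth: "real d \<le> (1 + growth_rate) ^ phase1_steps"
  unfolding phase1_steps_def using growth_rate_bounds d_pos by (intro power_ceiling_log_ge) auto

lemma phase1_steps_le: "real phase1_steps \<le> 2 powr (q + 3) * real m * L / signal_speed"
proof -
  let ?X = "2 * ln (real d) / growth_rate"
  have E: "0 < signal_speed" "signal_speed \<le> 1"
    using signal_speed_bounds inverse_K_le_1 by auto
  have X_nonneg: "0 \<le> ?X" using growth_rate_bounds d_pos by simp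
  have p2: "(2::real) powr (q + 2) = 16 * 2 powr (q - 2)" and p3: "(2::real) powr (q + 3) = 2 * 2 powr (q + 2)"
    using powr_add[of 2 "q - 2" 4] powr_add[of 2 "q + 2" 1] by (simp_all add: add.commute)
  have "?X = 32 * 2 powr (q - 2) * real m * ln (real d) / (q * signal_speed)"
    unfolding growth_rate_eq using q_gt_2 E m_pos by (simp add: field_simps)
  also have "\<dots> \<le> 32 * 2 powr (q - 2) * real m * L / (2 * signal_speed)"
    using ln_d_le_L q_gt_2 E L_ge_1 d_pos by (intro frac_le mult_left_mono mult_right_mono) auto
  also have "\<dots> = 2 powr (q + 2) * real m * L / signal_speed"
    unfolding p2 by simp
  finally have X_le: "?X \<le> 2 powr (q + 2) * real m * L / signal_speed" .
  have "1 * 1 * 1 \<le> 2 powr (q + 2) * real m * L"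
    using m_pos L_ge_1 q_gt_2 by (intro mult_mono ge_one_powr_ge_zero) auto
  then have one_le: "1 \<le> 2 powr (q + 2) * real m * L / signal_speed"
    using E by (simp add: le_divide_eq order.trans)
  have "real phase1_steps \<le> ?X + 1"
    unfolding phase1_steps_def using X_nonneg of_int_ceiling_le_add_one[of ?X] by simp
  also have "\<dots> \<le> 2 * (2 powr (q + 2) * real m * L / signal_speed)"
    using add_mono[OF X_le one_le] by (simp only: mult_2)
  finally show ?thesis unfolding p3 by simp
qed

lemma phase1_steps_le_T: "real phase1_steps \<le> K * real m / signal_speed"
proof -
  have "(2::real) powr (q + 3) \<le> 2 powr (q + 4)" by (intro powr_mono) auto
  also have "\<dots> \<le> phase1_const q"
    using noise_budget_const_ge(1)[OF q_gt_2] phase1_const_ge[OF q_gt_2] by linarith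
  finally have "2 powr (q + 3) * L \<le> phase1_const q * L"
    using L_ge_1 by (intro mult_right_mono) auto
  then have "2 powr (q + 3) * L \<le> K"
    using K_ge(1) by linarith
  then have "2 powr (q + 3) * L * real m / signal_speed \<le> K * real m / signal_speed"
    using signal_speed_bounds(1) by (intro divide_right_mono mult_right_mono) auto
  then show ?thesis using phase1_steps_le by (simp add: mult.commute mult.left_commute)
qed

lemma drift_identity:
  "\<eta> * noise_scale powr (q - 1) * (\<sigma>p\<^sup>2 * real d) / signal_speed
    = noise_scale / (vnorm d mu / (\<sigma>p * sqrt (real d))) powr q"
proof -
  have z: "0 < \<sigma>p * sqrt (real d)" using \<sigma>p_pos d_pos by simp
  have "\<eta> * noise_scale powr (q - 1) * (\<sigma>p\<^sup>2 * real d) / signal_speed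
      = (\<sigma>0 * (\<sigma>p * sqrt (real d))) powr (q - 1) * (\<sigma>p * sqrt (real d))\<^sup>2
        / ((vnorm d mu)\<^sup>2 * (\<sigma>0 * vnorm d mu) powr (q - 2))"
    unfolding signal_speed_def noise_scale_def signal_scale_def vnorm_square[symmetric]
    using \<eta>_pos by (simp add: power_mult_distrib)
  also have "\<dots> = noise_scale / (vnorm d mu / (\<sigma>p * sqrt (real d))) powr q"
    unfolding noise_scale_def using \<sigma>0_pos z mu_pos by (rule powr_scaling_identity)
  finally show ?thesis .
qed

lemma act_deriv_noise_le:
  "act_deriv q (2 * L * noise_scale + noise_scale)
    \<le> q * 3 powr (q - 1) * L powr (q - 1) * noise_scale powr (q - 1)"
proof -
  have "act_deriv q (2 * L * noise_scale + noise_scale) \<le> q * (3 * L * noise_scale) powr (q - 1)"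
    unfolding act_deriv_def using scales_pos L_ge_1 q_gt_2 by (intro mult_left_mono powr_mono2) auto
  then show ?thesis
    using scales_pos L_ge_1 by (simp add: powr_mult mult.assoc)
qed

lemma noise_budget_const_le: "noise_budget_const q \<le> phase1_const q * L"
proof -
  have "phase1_const q \<le> phase1_const q * L"
    using L_ge_1 phase1_const_pos by (simp add: mult_le_cancel_left1)
  then show ?thesis
    using phase1_const_ge[OF q_gt_2] by linarith
qed

lemma noise_budget_holds:
  "real phase1_steps * (\<eta> / (real n * real m) * act_deriv q (2 * L * noise_scale + noise_scale)
     * (2 * (\<sigma>p\<^sup>2 * real d))) \<le> noise_scale"
proof -
  let ?s = "noise_scale" and ?E = "signal_speed" and ?D = "\<sigma>p\<^sup>2 * real d"
    and ?snr = "vnorm d mu / (\<sigma>p * sqrt (real d))"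
  have s: "0 < ?s" and E: "0 < ?E" and L: "1 \<le> L"
    using scales_pos signal_speed_bounds L_ge_1 by auto
  have "real phase1_steps * (\<eta> / (real n * real m) * act_deriv q (2 * L * ?s + ?s) * (2 * ?D))
      \<le> 2 powr (q + 3) * real m * L / ?E
         * (\<eta> / (real n * real m) * (q * 3 powr (q - 1) * L powr (q - 1) * ?s powr (q - 1)) * (2 * ?D))"
    using L E act_deriv_nonneg[of q] q_gt_2 \<eta>_pos
    by (intro mult_mono phase1_steps_le mult_right_mono mult_left_mono act_deriv_noise_le) auto
  also have "\<dots> = noise_budget_const q * (L * L powr (q - 1)) / real n
      * (\<eta> * ?s powr (q - 1) * ?D / ?E)"
    unfolding noise_budget_const_def using m_pos n_pos E powr_add[of 2 "q + 3" 1]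
    by (simp add: field_simps add.commute)
  also have "L * L powr (q - 1) = L powr q"
    using L powr_add[of L "q - 1" 1] by simp
  also have "\<eta> * ?s powr (q - 1) * ?D / ?E = ?s / ?snr powr q"
    by (rule drift_identity)
  also have "noise_budget_const q * L powr q / real n * (?s / ?snr powr q)
      = noise_budget_const q * ?s * L powr q / (real n * ?snr powr q)"
    by (simp add: field_simps)
  also have "\<dots> \<le> noise_budget_const q * ?s * L powr q / K"
    using scaled_hypotheses(5) K_pos s noise_budget_const_ge(2)[OF q_gt_2] q_gt_2
    by (intro divide_left_mono mult_nonneg_nonneg) auto
  also have "\<dots> = noise_budget_const q * ?s / (phase1_const q * L)"
    unfolding K_def using L powr_add[of L q 1] phase1_const_pos by (simp add: field_simps)
  also have "\<dots> \<le> ?s"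
    using noise_budget_const_le s L phase1_const_pos by (simp add: divide_simps mult_left_mono)
  finally show ?thesis .
qed

lemma signal_budget_holds:
  "2 * L * signal_scale + 1 / phase1_const q \<le> signal_scale / 2 * (1 + growth_rate) ^ phase1_steps"
proof -
  have sd: "0 < sqrt (real d)" using d_pos by simp
  have "1 \<le> sqrt (real d)" using d_pos by simp
  also have "\<dots> = 1 / sqrt (real d) * real d"
    using sd by (simp add: field_simps)
  also have "\<dots> \<le> signal_scale * real d"
    using signal_scale_ge by (intro mult_right_mono) auto
  also have "\<dots> \<le> signal_scale * (1 + growth_rate) ^ phase1_steps"
    using phase1_steps_growth scales_pos by (intro mult_left_mono) auto
  finally show ?thesis using phase1_rooms(2) by simp
qed

lemma gd_phase1_instance:
  "gd_phase1 q d m n mu y xi \<eta> W0 (\<sigma>p\<^sup>2 * real d) (2 * L * noise_scale) noise_scale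
     (2 * L * signal_scale) signal_scale (1 / phase1_const q) phase1_steps"
proof (unfold_locales)
  show "0 < vinner d mu mu" using mu_pos by (simp flip: vnorm_square)
  show "0 < \<sigma>p\<^sup>2 * real d" using \<sigma>p_pos d_pos by simp
  show "\<sigma>p\<^sup>2 * real d / 2 \<le> vinner d (xi i) (xi i) \<and> vinner d (xi i) (xi i) \<le> 3 * (\<sigma>p\<^sup>2 * real d) / 2"
    if "i < n" for i
    using noise_norm[OF that] by (simp add: mult.assoc)
  show "\<exists>r<m. signal_scale / 2 \<le> of_int j * vinner d (W0 j r) mu" if "j \<in> {1, -1}" for j
    using prelim that unfolding E_prelim_def signal_scale_def by blast
  show "real n / 4 \<le> real (card {i. i < n \<and> y i = j})" if "j \<in> {1, -1}" for j
    using prelim that unfolding E_prelim_def by auto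
  show "real phase1_steps * (\<eta> / (real n * real m) * act_deriv q (2 * L * noise_scale + noise_scale)
      * (2 * (\<sigma>p\<^sup>2 * real d))) \<le> noise_scale"
    by (rule noise_budget_holds)
  show "2 * L * signal_scale + 1 / phase1_const q \<le> signal_scale / 2 * (1 + \<eta> * q * vinner d mu mu
      * (signal_scale / 2) powr (q - 2) / (16 * real m)) ^ phase1_steps"
    using signal_budget_holds unfolding growth_rate_def .
qed (use q_gt_2 \<eta>_pos labels noise_orth n_pos scales_pos noise_cross_le init_noise_le init_signal_le phase1_rooms in auto)

lemma phase1_conclusion:
  "\<exists>T1::nat.
     real T1 \<le> phase1_const q * ln (real m * real n * real d / \<delta>) powr (q + 1) * real m
                 / (\<eta> * \<sigma>0 powr (q - 2) * vnorm d mu powr q)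
   \<and> (\<forall>\<gamma> \<rho>. (\<forall>t. \<forall>j\<in>{1,-1}. \<forall>r<m. \<forall>k<d.
             gd q d m n mu y xi \<eta> W0 t j r k = W0 j r k + of_int j * \<gamma> t j r * mu k / (vnorm d mu)\<^sup>2
                 + (\<Sum>i<n. \<rho> t j r i * xi i k / (vnorm d (xi i))\<^sup>2))
        \<longrightarrow> (\<forall>j\<in>{1,-1}. \<exists>r<m. \<gamma> T1 j r \<ge> 1 / phase1_const q)
          \<and> (\<forall>j\<in>{1,-1}. \<forall>r<m. \<forall>i<n. \<forall>t\<le>T1.
                \<bar>\<rho> t j r i\<bar> \<le> phase1_const q * \<sigma>0 * \<sigma>p * sqrt (real d)))"
proof (intro exI[of _ phase1_steps] conjI allI impI)
  interpret gd: gd_phase1 q d m n mu y xi \<eta> W0 "\<sigma>p\<^sup>2 * real d" "2 * L * noise_scale" noise_scale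
      "2 * L * signal_scale" signal_scale "1 / phase1_const q" phase1_steps
    by (rule gd_phase1_instance)
  show "real phase1_steps \<le> phase1_const q * ln (real m * real n * real d / \<delta>) powr (q + 1) * real m
      / (\<eta> * \<sigma>0 powr (q - 2) * vnorm d mu powr q)"
    using phase1_steps_le_T unfolding signal_speed_eq K_def L_def .
  fix \<gamma> \<rho>
  assume "\<forall>t. \<forall>j\<in>{1,-1}. \<forall>r<m. \<forall>k<d.
      gd q d m n mu y xi \<eta> W0 t j r k = W0 j r k + of_int j * \<gamma> t j r * mu k / (vnorm d mu)\<^sup>2
        + (\<Sum>i<n. \<rho> t j r i * xi i k / (vnorm d (xi i))\<^sup>2)"
  then have dec: "gd.signal_noise_decomposition \<gamma> \<rho>"
    unfolding gd.signal_noise_decomposition_def .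
  show "\<forall>j\<in>{1,-1}. \<exists>r<m. \<gamma> phase1_steps j r \<ge> 1 / phase1_const q"
    using gd.signal_gain_reaches gd.decomposition_signal_coefficient[OF dec] by metis
  have "2 * noise_scale \<le> phase1_const q * noise_scale"
    using phase1_const_ge_64 scales_pos by (intro mult_right_mono) auto
  then show "\<forall>j\<in>{1,-1}. \<forall>r<m. \<forall>i<n. \<forall>t\<le>phase1_steps.
      \<bar>\<rho> t j r i\<bar> \<le> phase1_const q * \<sigma>0 * \<sigma>p * sqrt (real d)"
    using gd.noise_coefficient_bound[OF dec] unfolding noise_scale_def
    by (fastforce simp: mult.assoc)
qed

end

theorem lemma5p4:
  fixes q :: real
  assumes "q > 2"
  shows "\<exists>C>0. \<exists>\<kappa>\<ge>0. \<forall>(d::nat) (m::nat) (n::nat) (\<delta>::real) (\<sigma>p::real) (\<sigma>0::real) (\<eta>::real)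
            (mu::nat \<Rightarrow> real) (y::nat \<Rightarrow> int) (xi::nat \<Rightarrow> nat \<Rightarrow> real)
            (W0::int \<Rightarrow> nat \<Rightarrow> nat \<Rightarrow> real).
    let L = ln (real m * real n * real d / \<delta>);
        SNR = vnorm d mu / (\<sigma>p * sqrt (real d));
        W = gd q d m n mu y xi \<eta> W0
    in
    (d \<ge> 1 \<and> m \<ge> 1 \<and> n \<ge> 1 \<and> 0 < \<delta> \<and> \<delta> < 1 \<and> \<sigma>p > 0 \<and> \<sigma>0 > 0 \<and> \<eta> > 0
     \<and> vnorm d mu > 0
     \<and> (\<forall>i<n. y i \<in> {1, -1})
     \<and> (\<forall>i<n. vinner d (xi i) mu = 0)
     \<and> E_prelim d m n \<delta> \<sigma>p \<sigma>0 mu y xi W0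
     \<and> real d \<ge> C * L powr \<kappa> * real m powr (max 2 (4 / (q - 2)))
                  * real n powr (max 4 ((2 * q - 2) / (q - 2)))
     \<and> real n \<ge> C * (ln (real d)) powr \<kappa> \<and> real m \<ge> C * (ln (real d)) powr \<kappa>
     \<and> \<eta> \<le> min (1 / (vnorm d mu)\<^sup>2) (1 / (\<sigma>p\<^sup>2 * real d)) / (C * L powr \<kappa>)
     \<and> \<sigma>0 \<ge> C * L powr \<kappa> * real n / sqrt (real d)
                * min (1 / (\<sigma>p * sqrt (real d))) (1 / vnorm d mu)
     \<and> \<sigma>0 \<le> real m powr (- 2 / (q - 2)) * real n powr (- max (1 / (q - 2)) 1)
                * min (1 / (\<sigma>p * sqrt (real d))) (1 / vnorm d mu) / (C * L powr \<kappa>)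
     \<and> real n * SNR powr q \<ge> C * L powr \<kappa>)
    \<longrightarrow>
    (\<exists>T1::nat.
       real T1 \<le> C * L powr \<kappa> * real m / (\<eta> * \<sigma>0 powr (q - 2) * vnorm d mu powr q)
     \<and> (\<forall>\<gamma> \<rho>. (\<forall>t. \<forall>j\<in>{1,-1}. \<forall>r<m. \<forall>k<d.
               W t j r k = W0 j r k + of_int j * \<gamma> t j r * mu k / (vnorm d mu)\<^sup>2
                           + (\<Sum>i<n. \<rho> t j r i * xi i k / (vnorm d (xi i))\<^sup>2))
          \<longrightarrow> (\<forall>j\<in>{1,-1}. \<exists>r<m. \<gamma> T1 j r \<ge> 1 / C)
            \<and> (\<forall>j\<in>{1,-1}. \<forall>r<m. \<forall>i<n. \<forall>t\<le>T1.
                  \<bar>\<rho> t j r i\<bar> \<le> C * \<sigma>0 * \<sigma>p * sqrt (real d))))"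
proof -
  have C_pos: "0 < phase1_const q"
    using phase1_const_ge[OF assms] noise_budget_const_ge_64[OF assms] by linarith
  have \<kappa>_nonneg: "0 \<le> q + 1" using assms by simp
  show ?thesis
    unfolding Let_def
    by (intro exI[of _ "phase1_const q"] conjI C_pos exI[of _ "q + 1"] \<kappa>_nonneg allI impI
        phase1_scaling.phase1_conclusion, unfold phase1_scaling_def, elim conjE, intro conjI)
      (use assms in assumption)+
qed

end
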